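(* For every $n$ that is a power of a prime, there exists a split graph $G_n$ with $2(n^2+n+1)$ vertices such that every fractional $2$-guidance system and every weak $2$-guidance system of $G_n$ has maximum outdegree at least $(n+1)/2$.
   Context: All graphs are finite, simple and undirected. A split graph is a graph whose vertex set can be partitioned into a clique and an independent set. For $u,v$ at distance $\ell$, $\Gamma_G(u,v)$ is the set of neighbors of $u$ at distance $\ell-1$ from $v$. A partial orientation of $G$ is a directed graph $\vec{H}$ on $V(G)$ with every $(u,v)\in E(\vec{H})$ satisfying $uv\in E(G)$. $B_{\vec{H}}(v,a)$ is the set of vertices reachable from $v$ by a directed path of length at most $a$. A weak $r$-guidance system is a partial orientation $\vec{H}$ such that for any distinct $u,v$ at distance $\ell\le r$ there exist non-negative integers $a,b$ with $a+b=\ell-1$ such that $G$ has an edge between $B_{\vec{H}}(u,a)$ and $B_{\vec{H}}(v,b)$. A fractional orientation assigns a non-negative real $p(u,v)$ to each ordered pair of adjacent vertices; its maximum outdegree is $\max_u\sum_{v:uv\in E(G)}p(u,v)$. A fractional $r$-guidance system is a fractional orientation with $\sum_{y\in\Gamma_G(u,v)}p(u,y)+\sum_{y\in\Gamma_G(v,u)}p(v,y)\ge1$ for all $u,v$ at distance between $2$ and $r$. *)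

theory Defs
  imports Complex_Main "HOL-Computational_Algebra.Primes"
begin

definition graph :: "'a set \<Rightarrow> ('a \<Rightarrow> 'a \<Rightarrow> bool) \<Rightarrow> bool" where
  "graph V E \<longleftrightarrow> finite V \<and> (\<forall>x y. E x y \<longrightarrow> x \<in> V \<and> y \<in> V)
     \<and> (\<forall>x y. E x y \<longrightarrow> E y x) \<and> (\<forall>x. \<not> E x x)"

definition split_graph :: "'a set \<Rightarrow> ('a \<Rightarrow> 'a \<Rightarrow> bool) \<Rightarrow> bool" where
  "split_graph V E \<longleftrightarrow> (\<exists>K I. K \<union> I = V \<and> K \<inter> I = {}
     \<and> (\<forall>x\<in>K. \<forall>y\<in>K. x \<noteq> y \<longrightarrow> E x y)
     \<and> (\<forall>x\<in>I. \<forall>y\<in>I. \<not> E x y))"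

fun walk :: "('a \<Rightarrow> 'a \<Rightarrow> bool) \<Rightarrow> nat \<Rightarrow> 'a \<Rightarrow> 'a \<Rightarrow> bool" where
  "walk R 0 u v = (u = v)"
| "walk R (Suc k) u v = (\<exists>w. R u w \<and> walk R k w v)"

definition at_dist :: "('a \<Rightarrow> 'a \<Rightarrow> bool) \<Rightarrow> 'a \<Rightarrow> 'a \<Rightarrow> nat \<Rightarrow> bool" where
  "at_dist E u v l \<longleftrightarrow> walk E l u v \<and> (\<forall>k<l. \<not> walk E k u v)"

definition Gamma :: "('a \<Rightarrow> 'a \<Rightarrow> bool) \<Rightarrow> 'a \<Rightarrow> 'a \<Rightarrow> 'a set" where
  "Gamma E u v = {y. E u y \<and> (\<exists>l. at_dist E u v l \<and> at_dist E y v (l - 1))}"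

definition partial_orientation :: "('a \<Rightarrow> 'a \<Rightarrow> bool) \<Rightarrow> ('a \<Rightarrow> 'a \<Rightarrow> bool) \<Rightarrow> bool" where
  "partial_orientation E H \<longleftrightarrow> (\<forall>u v. H u v \<longrightarrow> E u v)"

definition dball :: "('a \<Rightarrow> 'a \<Rightarrow> bool) \<Rightarrow> 'a \<Rightarrow> nat \<Rightarrow> 'a set" where
  "dball H v a = {w. \<exists>k\<le>a. walk H k v w}"

definition weak_guidance :: "'a set \<Rightarrow> ('a \<Rightarrow> 'a \<Rightarrow> bool) \<Rightarrow> nat \<Rightarrow> ('a \<Rightarrow> 'a \<Rightarrow> bool) \<Rightarrow> bool" where
  "weak_guidance V E r H \<longleftrightarrow> partial_orientation E H \<and>
     (\<forall>u\<in>V. \<forall>v\<in>V. \<forall>l. u \<noteq> v \<and> at_dist E u v l \<and> l \<le> r \<longrightarrow>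
        (\<exists>a b. a + b = l - 1 \<and> (\<exists>x\<in>dball H u a. \<exists>y\<in>dball H v b. E x y)))"

definition max_outdeg :: "'a set \<Rightarrow> ('a \<Rightarrow> 'a \<Rightarrow> bool) \<Rightarrow> nat" where
  "max_outdeg V H = Max ((\<lambda>u. card {v. H u v}) ` V)"

definition fractional_orientation :: "('a \<Rightarrow> 'a \<Rightarrow> bool) \<Rightarrow> ('a \<Rightarrow> 'a \<Rightarrow> real) \<Rightarrow> bool" where
  "fractional_orientation E p \<longleftrightarrow> (\<forall>u v. E u v \<longrightarrow> p u v \<ge> 0)"

definition frac_max_outdeg :: "'a set \<Rightarrow> ('a \<Rightarrow> 'a \<Rightarrow> bool) \<Rightarrow> ('a \<Rightarrow> 'a \<Rightarrow> real) \<Rightarrow> real" where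
  "frac_max_outdeg V E p = Max ((\<lambda>u. \<Sum>v\<in>{v. E u v}. p u v) ` V)"

definition frac_guidance :: "'a set \<Rightarrow> ('a \<Rightarrow> 'a \<Rightarrow> bool) \<Rightarrow> nat \<Rightarrow> ('a \<Rightarrow> 'a \<Rightarrow> real) \<Rightarrow> bool" where
  "frac_guidance V E r p \<longleftrightarrow> fractional_orientation E p \<and>
     (\<forall>u\<in>V. \<forall>v\<in>V. \<forall>l. at_dist E u v l \<and> 2 \<le> l \<and> l \<le> r \<longrightarrow>
        (\<Sum>y\<in>Gamma E u v. p u y) + (\<Sum>y\<in>Gamma E v u. p v y) \<ge> 1)"

end

theory Submission
  imports Defs
begin

(* Let A be an independent set in which every pair {u, v} has exactly one common neighbour,
   its hub h {u, v}, with distinct pairs having distinct hubs. Then u and v are at distance 2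
   and Gamma(u, v) = Gamma(v, u) = {h {u, v}}, so a fractional 2-guidance system satisfies
   p(u, h {u, v}) + p(v, h {u, v}) >= 1: a fractional tournament on A, in which some vertex
   has out-weight at least (|A| - 1) / 2 by averaging. The indicator of a weak 2-guidance
   system is a fractional one with the same maximum outdegree.
   For |A| = n + 2 the (n + 2 choose 2) hubs fit into a clique of n^2 + n + 1 vertices, next to
   an independent set of the same size containing A; the prime-power hypothesis is only
   needed for n >= 1. *)

lemma graph_finite: "graph V E \<Longrightarrow> finite V"
  unfolding graph_def by blast

lemma graph_sym: "graph V E \<Longrightarrow> E x y \<Longrightarrow> E y x"
  unfolding graph_def by blast

lemma graph_finite_neighbours:
  assumes "graph V E"
  shows "finite {y. E u y}"
  using assms unfolding graph_def by (metis finite_subset mem_Collect_eq subsetI)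

lemma at_dist_unique:
  assumes "at_dist R u v l" "at_dist R u v l'"
  shows "l = l'"
  using assms unfolding at_dist_def by (metis linorder_neqE_nat)

lemma at_dist_1_iff: "at_dist R u v 1 \<longleftrightarrow> u \<noteq> v \<and> R u v"
  unfolding at_dist_def by auto

lemma at_dist_2_iff:
  "at_dist R u v 2 \<longleftrightarrow> u \<noteq> v \<and> \<not> R u v \<and> (\<exists>w. R u w \<and> R w v)"
  unfolding at_dist_def by (auto simp: numeral_2_eq_2 less_Suc_eq)

lemma at_dist_2_commute:
  assumes "graph V E" "at_dist E u v 2"
  shows "at_dist E v u 2"
  using assms unfolding at_dist_2_iff graph_def by blast

lemma Gamma_subset_neighbours: "Gamma E u v \<subseteq> {y. E u y}"
  unfolding Gamma_def by blast

lemma Gamma_at_dist_2: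
  assumes "graph V E" "at_dist E u v 2"
  shows "Gamma E u v = {y. E u y \<and> E y v}"
proof -
  have "at_dist E y v 1 \<longleftrightarrow> E y v" for y
    using assms(1) unfolding at_dist_1_iff graph_def by blast
  then show ?thesis
    unfolding Gamma_def using at_dist_unique[OF _ assms(2)] assms(2) by fastforce
qed

lemma frac_guidance_at_dist_2:
  assumes "frac_guidance V E 2 p" "u \<in> V" "v \<in> V" "at_dist E u v 2"
  shows "(\<Sum>y\<in>Gamma E u v. p u y) + (\<Sum>y\<in>Gamma E v u. p v y) \<ge> 1"
  using assms unfolding frac_guidance_def by blast

lemma dball_0: "dball H v 0 = {v}"
  unfolding dball_def by auto

lemma dball_Suc_0: "dball H v (Suc 0) = insert v {w. H v w}"
  unfolding dball_def by (auto simp: le_Suc_eq)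

lemma weak_guidance_arc_into_Gamma:
  assumes "graph V E" "weak_guidance V E 2 H" "u \<in> V" "v \<in> V" "at_dist E u v 2"
  shows "\<exists>y. y \<in> Gamma E u v \<and> H u y \<or> y \<in> Gamma E v u \<and> H v y"
proof -
  have "u \<noteq> v" "\<not> E u v" using assms(5) unfolding at_dist_2_iff by blast+
  with assms(2-5) have "\<exists>a b. a + b = 2 - 1 \<and> (\<exists>x\<in>dball H u a. \<exists>y\<in>dball H v b. E x y)"
    unfolding weak_guidance_def by blast
  then obtain a b where ab: "a + b = 1" and "\<exists>x\<in>dball H u a. \<exists>y\<in>dball H v b. E x y"
    by auto
  then obtain x y where xy: "x \<in> dball H u a" "y \<in> dball H v b" "E x y"
    by blast
  have sym: "E x y \<Longrightarrow> E y x" for x y using graph_sym[OF assms(1)] .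
  have HE: "H x y \<Longrightarrow> E x y" for x y
    using assms(2) unfolding weak_guidance_def partial_orientation_def by blast
  \<comment> \<open>One of the two balls is just its centre, which is not adjacent to the other centre,
    so the edge must start at an arc out of the other centre.\<close>
  have "H u x \<and> E x v \<or> H v y \<and> E y u"
    using ab xy \<open>\<not> E u v\<close> sym by (cases a) (auto simp: dball_0 dball_Suc_0)
  moreover have "Gamma E u v = {y. E u y \<and> E y v}" "Gamma E v u = {y. E v y \<and> E y u}"
    using Gamma_at_dist_2[OF assms(1) assms(5)]
      Gamma_at_dist_2[OF assms(1) at_dist_2_commute[OF assms(1,5)]] by simp_all
  ultimately show ?thesis using HE by blast
qed

lemma sum_of_bool_ge_1:
  assumes "finite S" "y \<in> S" "P y"
  shows "1 \<le> (\<Sum>z\<in>S. of_bool (P z) :: real)"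
  using assms by (auto simp: card_gt_0_iff Suc_le_eq)

lemma weak_guidance_imp_frac_guidance:
  assumes "graph V E" "weak_guidance V E 2 H"
  shows "frac_guidance V E 2 (\<lambda>u v. of_bool (H u v))"
  unfolding frac_guidance_def fractional_orientation_def
proof (intro conjI allI ballI impI)
  fix u v l
  assume "u \<in> V" "v \<in> V" and "at_dist E u v l \<and> 2 \<le> l \<and> l \<le> 2"
  then have "at_dist E u v 2" by (metis le_antisym)
  then obtain y where "y \<in> Gamma E u v \<and> H u y \<or> y \<in> Gamma E v u \<and> H v y"
    using weak_guidance_arc_into_Gamma[OF assms \<open>u \<in> V\<close> \<open>v \<in> V\<close>] by blast
  moreover have fin: "finite (Gamma E s t)" for s t
    using finite_subset[OF Gamma_subset_neighbours graph_finite_neighbours[OF assms(1)]] .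
  ultimately have "1 \<le> (\<Sum>y\<in>Gamma E u v. of_bool (H u y) :: real)
      \<or> 1 \<le> (\<Sum>y\<in>Gamma E v u. of_bool (H v y) :: real)"
    using sum_of_bool_ge_1[OF fin] by blast
  moreover have "0 \<le> (\<Sum>y\<in>Gamma E u v. of_bool (H u y) :: real)"
    "0 \<le> (\<Sum>y\<in>Gamma E v u. of_bool (H v y) :: real)"
    by (simp_all add: sum_nonneg)
  ultimately show "(\<Sum>y\<in>Gamma E u v. of_bool (H u y)) + (\<Sum>y\<in>Gamma E v u. of_bool (H v y)) \<ge> (1::real)"
    by linarith
qed simp

lemma frac_max_outdeg_of_bool:
  assumes "graph V E" "partial_orientation E H" "V \<noteq> {}"
  shows "frac_max_outdeg V E (\<lambda>u v. of_bool (H u v)) = real (max_outdeg V H)"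
proof -
  have "(\<Sum>v\<in>{v. E u v}. of_bool (H u v)) = real (card {v. H u v})" for u
  proof -
    have "finite {v. E u v}" by (rule graph_finite_neighbours[OF assms(1)])
    moreover have "{v. E u v} \<inter> {v. H u v} = {v. H u v}"
      using assms(2) unfolding partial_orientation_def by auto
    ultimately show ?thesis by simp
  qed
  moreover have "finite V" by (rule graph_finite[OF assms(1)])
  moreover have "real (Max (g ` V)) = Max ((\<lambda>u. real (g u)) ` V)" for g :: "'a \<Rightarrow> nat"
    using mono_Max_commute[of real "g ` V"] \<open>finite V\<close> assms(3)
    by (simp add: mono_def image_image)
  ultimately show ?thesis
    unfolding frac_max_outdeg_def max_outdeg_def by simp
qed

lemma sum_offdiag_swap:
  fixes f :: "'a \<Rightarrow> 'a \<Rightarrow> real"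
  assumes "finite A"
  shows "(\<Sum>i\<in>A. \<Sum>k\<in>A-{i}. f k i) = (\<Sum>i\<in>A. \<Sum>k\<in>A-{i}. f i k)"
proof -
  have "A - {i} = {k. k \<in> A \<and> i \<noteq> k}" "A - {i} = {k. k \<in> A \<and> k \<noteq> i}" for i
    by auto
  then show ?thesis
    using sum.swap_restrict[OF assms assms, of "\<lambda>i k. f k i" "(\<noteq>)"] by simp
qed

lemma ex_row_sum_ge_half:
  fixes f :: "'a \<Rightarrow> 'a \<Rightarrow> real"
  assumes "finite A" "A \<noteq> {}"
    and pair: "\<And>i k. \<lbrakk>i \<in> A; k \<in> A; i \<noteq> k\<rbrakk> \<Longrightarrow> f i k + f k i \<ge> 1"
  shows "\<exists>i\<in>A. (\<Sum>k\<in>A-{i}. f i k) \<ge> (real (card A) - 1) / 2"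
proof (rule ccontr)
  assume "\<not> ?thesis"
  then have "(\<Sum>i\<in>A. \<Sum>k\<in>A-{i}. f i k) < (\<Sum>i\<in>A. (real (card A) - 1) / 2)"
    using assms(1,2) by (intro sum_strict_mono) auto
  also have "\<dots> = (\<Sum>i\<in>A. \<Sum>k\<in>A-{i}. 1) / 2"
    using assms(1,2) by (simp add: card_Diff_singleton of_nat_diff Suc_le_eq card_gt_0_iff)
  also have "\<dots> \<le> (\<Sum>i\<in>A. \<Sum>k\<in>A-{i}. f i k + f k i) / 2"
    using pair by (intro divide_right_mono sum_mono) auto
  also have "\<dots> = (\<Sum>i\<in>A. \<Sum>k\<in>A-{i}. f i k)"
    using sum_offdiag_swap[OF assms(1), of f] by (simp add: sum.distrib)
  finally show False by simp
qed

locale pair_hubs =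
  fixes V :: "'a set" and E :: "'a \<Rightarrow> 'a \<Rightarrow> bool" and A :: "'a set" and h :: "'a set \<Rightarrow> 'a"
  assumes graph: "graph V E"
    and A_subset: "A \<subseteq> V"
    and A_independent: "\<lbrakk>u \<in> A; v \<in> A\<rbrakk> \<Longrightarrow> \<not> E u v"
    and hub_adj: "\<lbrakk>u \<in> A; v \<in> A; u \<noteq> v\<rbrakk> \<Longrightarrow> E u (h {u, v})"
    and common_neighbour_eq_hub: "\<lbrakk>u \<in> A; v \<in> A; u \<noteq> v; E u w; E v w\<rbrakk> \<Longrightarrow> w = h {u, v}"
    and hub_inj: "inj_on h {B. B \<subseteq> A \<and> card B = 2}"
begin

lemma E_sym: "E x y \<Longrightarrow> E y x"
  by (rule graph_sym[OF graph])

lemma finite_A: "finite A"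
  using graph_finite[OF graph] A_subset by (rule finite_subset[rotated])

lemma hub_adj_snd: "\<lbrakk>u \<in> A; v \<in> A; u \<noteq> v\<rbrakk> \<Longrightarrow> E (h {u, v}) v"
  using E_sym[OF hub_adj[of v u]] by (simp add: insert_commute)

lemma at_dist_2_hub:
  assumes "u \<in> A" "v \<in> A" "u \<noteq> v"
  shows "at_dist E u v 2"
  unfolding at_dist_2_iff using assms A_independent hub_adj hub_adj_snd by blast

lemma Gamma_hub:
  assumes "u \<in> A" "v \<in> A" "u \<noteq> v"
  shows "Gamma E u v = {h {u, v}}"
  unfolding Gamma_at_dist_2[OF graph at_dist_2_hub[OF assms]]
  using assms hub_adj hub_adj_snd common_neighbour_eq_hub E_sym by blast

lemma inj_on_hub_row:
  assumes "u \<in> A"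
  shows "inj_on (\<lambda>v. h {u, v}) (A - {u})"
proof
  fix v v' assume "v \<in> A - {u}" "v' \<in> A - {u}" "h {u, v} = h {u, v'}"
  with assms have "{u, v} = {u, v'}" by (intro inj_onD[OF hub_inj]) auto
  then show "v = v'" using \<open>v \<in> A - {u}\<close> by (auto simp: doubleton_eq_iff)
qed

lemma frac_guidance_hub:
  assumes "frac_guidance V E 2 p" "u \<in> A" "v \<in> A" "u \<noteq> v"
  shows "p u (h {u, v}) + p v (h {v, u}) \<ge> 1"
  using frac_guidance_at_dist_2[OF assms(1) _ _ at_dist_2_hub[OF assms(2-4)]] assms(2-4) A_subset
    Gamma_hub[OF assms(2-4)] Gamma_hub[of v u] by auto

lemma frac_max_outdeg_ge:
  assumes "frac_guidance V E 2 p" "A \<noteq> {}"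
  shows "frac_max_outdeg V E p \<ge> (real (card A) - 1) / 2"
proof -
  obtain u where u: "u \<in> A" and row: "(\<Sum>v\<in>A-{u}. p u (h {u, v})) \<ge> (real (card A) - 1) / 2"
    using ex_row_sum_ge_half[OF finite_A assms(2), of "\<lambda>u v. p u (h {u, v})"]
      frac_guidance_hub[OF assms(1)] by blast
  have nonneg: "E u v \<Longrightarrow> p u v \<ge> 0" for v
    using assms(1) unfolding frac_guidance_def fractional_orientation_def by blast
  have "(\<Sum>v\<in>A-{u}. p u (h {u, v})) = (\<Sum>w\<in>(\<lambda>v. h {u, v}) ` (A - {u}). p u w)"
    by (simp add: sum.reindex inj_on_hub_row[OF u])
  also have "\<dots> \<le> (\<Sum>w\<in>{w. E u w}. p u w)"
    using graph_finite_neighbours[OF graph] u hub_adj nonneg by (intro sum_mono2) auto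
  also have "\<dots> \<le> frac_max_outdeg V E p"
    unfolding frac_max_outdeg_def using graph_finite[OF graph] u A_subset by (intro Max_ge) auto
  finally show ?thesis using row by linarith
qed

lemma max_outdeg_ge:
  assumes "weak_guidance V E 2 H" "A \<noteq> {}"
  shows "real (max_outdeg V H) \<ge> (real (card A) - 1) / 2"
proof -
  have "partial_orientation E H" using assms(1) unfolding weak_guidance_def by simp
  moreover have "V \<noteq> {}" using assms(2) A_subset by auto
  ultimately show ?thesis
    using frac_max_outdeg_ge[OF weak_guidance_imp_frac_guidance[OF graph assms(1)] assms(2)]
      frac_max_outdeg_of_bool[OF graph] by simp
qed

end

definition hub_split_graph :: "'a set \<Rightarrow> 'a set \<Rightarrow> ('a set \<Rightarrow> 'a) \<Rightarrow> 'a \<Rightarrow> 'a \<Rightarrow> bool" where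
  "hub_split_graph K A h x y \<longleftrightarrow> x \<in> K \<and> y \<in> K \<and> x \<noteq> y
     \<or> (\<exists>a\<in>A. \<exists>b\<in>A. a \<noteq> b \<and> (x = a \<and> y = h {a, b} \<or> x = h {a, b} \<and> y = a))"

locale hub_split =
  fixes K I A :: "'a set" and h :: "'a set \<Rightarrow> 'a"
  assumes finite_K: "finite K" and finite_I: "finite I" and disjoint: "K \<inter> I = {}"
    and A_subset: "A \<subseteq> I"
    and hub_in_K: "h ` {B. B \<subseteq> A \<and> card B = 2} \<subseteq> K"
    and hub_inj: "inj_on h {B. B \<subseteq> A \<and> card B = 2}"
begin

abbreviation "E \<equiv> hub_split_graph K A h"

lemma hub_mem_K: "\<lbrakk>a \<in> A; b \<in> A; a \<noteq> b\<rbrakk> \<Longrightarrow> h {a, b} \<in> K"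
  using hub_in_K by auto

lemma A_notin_K: "a \<in> A \<Longrightarrow> a \<notin> K"
  using disjoint A_subset by blast

lemma graph: "graph (K \<union> I) E"
  unfolding graph_def
proof (intro conjI allI impI)
  show "finite (K \<union> I)" using finite_K finite_I by simp
  fix x y assume "E x y"
  then show "x \<in> K \<union> I" "y \<in> K \<union> I" "E y x"
    using A_subset hub_mem_K unfolding hub_split_graph_def by auto
next
  fix x show "\<not> E x x"
    using A_notin_K hub_mem_K unfolding hub_split_graph_def by metis
qed

lemma split_graph: "split_graph (K \<union> I) E"
  unfolding split_graph_def
proof (intro exI conjI ballI impI)
  show "\<not> E x y" if "x \<in> I" "y \<in> I" for x y
    using that disjoint hub_mem_K A_subset unfolding hub_split_graph_def by auto
qed (use disjoint in \<open>auto simp: hub_split_graph_def\<close>)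

lemma neighbour_of_A:
  assumes "u \<in> A" "E u w"
  obtains b where "b \<in> A" "b \<noteq> u" "w = h {u, b}"
  using assms A_notin_K hub_mem_K unfolding hub_split_graph_def by metis

sublocale pair_hubs "K \<union> I" E A h
proof
  show "graph (K \<union> I) E" by (rule graph)
  show "A \<subseteq> K \<union> I" using A_subset by blast
  show "inj_on h {B. B \<subseteq> A \<and> card B = 2}" by (rule hub_inj)
  show "E u (h {u, v})" if "u \<in> A" "v \<in> A" "u \<noteq> v" for u v
    using that unfolding hub_split_graph_def by blast
  show "\<not> E u v" if "u \<in> A" "v \<in> A" for u v
    using that A_notin_K hub_mem_K unfolding hub_split_graph_def by metis
  show "w = h {u, v}" if uv: "u \<in> A" "v \<in> A" "u \<noteq> v" and "E u w" "E v w" for u v w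
  proof -
    obtain b where "b \<in> A" "b \<noteq> u" "w = h {u, b}"
      using neighbour_of_A[OF \<open>u \<in> A\<close> \<open>E u w\<close>] .
    moreover obtain b' where "b' \<in> A" "b' \<noteq> v" "w = h {v, b'}"
      using neighbour_of_A[OF \<open>v \<in> A\<close> \<open>E v w\<close>] .
    ultimately have "{u, b} = {v, b'}" using uv by (intro inj_onD[OF hub_inj]) auto
    then show ?thesis using \<open>w = h {u, b}\<close> \<open>u \<noteq> v\<close> by (auto simp: doubleton_eq_iff)
  qed
qed

end

lemma ex_hub_split:
  assumes "finite K" "finite I" "K \<inter> I = {}" "A \<subseteq> I" "card A choose 2 \<le> card K"
  obtains h where "hub_split K I A h"
proof -
  have "finite A" using assms(2,4) by (rule finite_subset[rotated])
  then have "card {B. B \<subseteq> A \<and> card B = 2} \<le> card K"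
    using assms(5) by (simp add: n_subsets)
  moreover have "finite {B. B \<subseteq> A \<and> card B = 2}" using \<open>finite A\<close> by simp
  ultimately obtain h where "h ` {B. B \<subseteq> A \<and> card B = 2} \<subseteq> K" "inj_on h {B. B \<subseteq> A \<and> card B = 2}"
    using card_le_inj[OF _ assms(1)] by blast
  with assms(1-4) show ?thesis
    by (intro that) (unfold_locales)
qed

theorem lemma31:
  fixes n :: nat
  assumes "\<exists>q k. prime q \<and> k \<ge> 1 \<and> n = q ^ k"
  shows "\<exists>(V :: nat set) E. graph V E \<and> split_graph V E \<and> card V = 2 * (n^2 + n + 1)
     \<and> (\<forall>p. frac_guidance V E 2 p \<longrightarrow> frac_max_outdeg V E p \<ge> (real n + 1) / 2)
     \<and> (\<forall>H. weak_guidance V E 2 H \<longrightarrow> real (max_outdeg V H) \<ge> (real n + 1) / 2)"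
proof -
  obtain q k where "prime q" "n = q ^ k" using assms by blast
  then have "n \<ge> 1" using prime_gt_0_nat[of q] by (simp add: Suc_le_eq)
  define N where "N = n^2 + n + 1"
  define A where "A = {..<n + 2}"
  have "(n + 2) * (n + 1) \<le> 2 * N"
    unfolding N_def using \<open>n \<ge> 1\<close> by (simp add: power2_eq_square algebra_simps)
  then have "card A choose 2 \<le> card {N..<2 * N}"
    unfolding A_def using div_le_mono[of _ _ 2] by (fastforce simp: choose_two)
  moreover have "A \<subseteq> {..<N}"
    unfolding A_def N_def using \<open>n \<ge> 1\<close> by (auto simp: power2_eq_square)
  moreover have "{N..<2 * N} \<inter> {..<N} = {}" by auto
  ultimately obtain h where "hub_split {N..<2 * N} {..<N} A h"
    using ex_hub_split[of "{N..<2 * N}" "{..<N}" A] by auto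
  then interpret hub_split "{N..<2 * N}" "{..<N}" A h .
  have "card ({N..<2 * N} \<union> {..<N}) = 2 * (n^2 + n + 1)"
    by (subst card_Un_disjoint) (auto simp: N_def)
  moreover have "card A = n + 2" "A \<noteq> {}" unfolding A_def by auto
  ultimately show ?thesis
    using graph split_graph frac_max_outdeg_ge max_outdeg_ge by fastforce
qed

end
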